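(* The following are equivalent: (i) There are $T_1\in(0,\infty]$, $c_1>0$ such that $c_1r^{-d}K_0(r)\le\nu_0(r)$ for all $0<r<T_1$. (ii) There are $T_2\in(0,\infty]$, $c_2\in(0,1]$, $\beta_2\in(0,2)$ such that $c_2\lambda^{\beta_2}K_0(\lambda r)\le K_0(r)$ for all $\lambda\le1$, $0<r<T_2$. (iii) There are $T_3\in(0,\infty]$, $c_3\in(0,1]$, $\beta_3\in[0,2)$ such that $c_3\lambda^{d+\beta_3}\nu_0(\lambda r)\le\nu_0(r)$ for all $\lambda\le1$, $0<r<T_3$. Moreover: (i) implies (ii) with $T_2=T_1$, $c_2=1$ and $\beta_2$ depending only on $d,c_1$; (i) implies (iii) with $T_3=T_1$ and $c_3,\beta_3$ depending only on $d,c_1$; (ii) implies (i) with $T_1=(c_2/2)^{1/(2-\beta_2)}T_2$ and $c_1$ depending only on $d,c_2,\beta_2$; (iii) implies (i) with $T_1=T_3$ and $c_1$ depending only on $d,c_3,\beta_3$.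
   Context: $\nu_0\colon[0,\infty)\to[0,\infty]$ is non-increasing with $\int_{\mathbb{R}^d}(1\wedge|x|^2)\nu_0(|x|)dx<\infty$ and $\int_{\mathbb{R}^d}\nu_0(|x|)dx=\infty$ (so $\nu_0(|x|)dx$ is the Lévy measure of a pure-jump isotropic unimodal Lévy process in $\mathbb{R}^d$ which is not compound Poisson). $K_0(r)=r^{-2}\int_{|x|<r}|x|^2\nu_0(|x|)dx$ for $r>0$. *)

theory Defs
  imports "HOL-Analysis.Analysis"
begin

text \<open>Radial profile nu0 of the Levy density nu0(|x|) dx on the Euclidean space 'a
  (dimension d = DIM('a)); values in [0,\<infinity>] are modelled by ennreal.\<close>

definition levy_profile :: "'a::euclidean_space itself \<Rightarrow> (real \<Rightarrow> ennreal) \<Rightarrow> bool" where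
  "levy_profile (_::'a itself) nu \<longleftrightarrow>
     (\<forall>s t. 0 \<le> s \<longrightarrow> s \<le> t \<longrightarrow> nu t \<le> nu s) \<and>
     (\<integral>\<^sup>+ x. ennreal (min 1 (norm x ^ 2)) * nu (norm x) \<partial>(lborel::'a measure)) < \<infinity> \<and>
     (\<integral>\<^sup>+ x. nu (norm x) \<partial>(lborel::'a measure)) = \<infinity>"

definition K0 :: "'a::euclidean_space itself \<Rightarrow> (real \<Rightarrow> ennreal) \<Rightarrow> real \<Rightarrow> ennreal" where
  "K0 (_::'a itself) nu r =
     ennreal (1 / r ^ 2) * (\<integral>\<^sup>+ x \<in> ball (0::'a) r. ennreal (norm x ^ 2) * nu (norm x) \<partial>lborel)"

definition cond_i :: "'a::euclidean_space itself \<Rightarrow> (real \<Rightarrow> ennreal) \<Rightarrow> ereal \<Rightarrow> real \<Rightarrow> bool" where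
  "cond_i A nu T c \<longleftrightarrow>
     (\<forall>r. 0 < r \<and> ereal r < T \<longrightarrow>
        ennreal (c * r powr (- real DIM('a))) * K0 A nu r \<le> nu r)"

definition cond_ii :: "'a::euclidean_space itself \<Rightarrow> (real \<Rightarrow> ennreal) \<Rightarrow> ereal \<Rightarrow> real \<Rightarrow> real \<Rightarrow> bool" where
  "cond_ii A nu T c \<beta> \<longleftrightarrow>
     (\<forall>l r. 0 < l \<and> l \<le> 1 \<and> 0 < r \<and> ereal r < T \<longrightarrow>
        ennreal (c * l powr \<beta>) * K0 A nu (l * r) \<le> K0 A nu r)"

definition cond_iii :: "'a::euclidean_space itself \<Rightarrow> (real \<Rightarrow> ennreal) \<Rightarrow> ereal \<Rightarrow> real \<Rightarrow> real \<Rightarrow> bool" where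
  "cond_iii (_::'a itself) nu T c \<beta> \<longleftrightarrow>
     (\<forall>l r. 0 < l \<and> l \<le> 1 \<and> 0 < r \<and> ereal r < T \<longrightarrow>
        ennreal (c * l powr (real DIM('a) + \<beta>)) * nu (l * r) \<le> nu r)"

end

theory Submission
  imports Defs
begin

text \<open>
  Let M(r) = r^2 K0(r) be the second moment of \<nu>0 over the ball B(r). Since \<nu>0 is
  non-increasing, the part of M(r) carried by the annulus s < |x| < r lies between
  s^2 \<nu>0(r) |B(r) - B(s)| and r^2 \<nu>0(s) |B(r)|. Condition (i) therefore says that the annulus
  r/2 < |x| < r carries a fixed fraction of M(r); iterating over dyadic scales gives
  M(\<lambda>r) \<le> \<lambda>^\<alpha> M(r), which is (ii), and together with \<nu>0(s) \<le> 8 M(s) / (|B(1)| s^(d+2)) also (iii).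
  Conversely, (ii) directly, and (iii) after the substitution x \<mapsto> \<rho>x, make M at least double
  between the radii \<rho>r and r for a fixed \<rho> < 1; then the annulus carries half of M(r), and its
  upper bound is (i).
\<close>

section \<open>Radial integrals on Euclidean space\<close>

lemma borel_measurable_antimono_norm:
  fixes nu :: "real \<Rightarrow> ennreal"
  assumes "antimono_on {0..} nu"
  shows "(\<lambda>x::'a::euclidean_space. nu (norm x)) \<in> borel_measurable borel"
proof (rule borel_measurableI_greater)
  fix y
  let ?S = "{t::real. 0 \<le> t \<and> y < nu t}"
  have "is_interval ?S"
    unfolding is_interval_1
  proof (intro ballI allI impI, elim conjE)
    fix a b x assume "a \<in> ?S" "b \<in> ?S" "a \<le> x" "x \<le> b"
    moreover have "nu b \<le> nu x"
      using monotone_onD[OF assms, of x b] \<open>a \<in> ?S\<close> \<open>a \<le> x\<close> \<open>x \<le> b\<close> by auto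
    ultimately show "x \<in> ?S" by auto
  qed
  then have "?S \<in> sets borel" by (rule real_interval_borel_measurable)
  then have "norm -` ?S \<inter> space (borel::'a measure) \<in> sets borel"
    by (rule measurable_sets[rotated]) measurable
  moreover have "norm -` ?S \<inter> space (borel::'a measure) = {x\<in>space borel. y < nu (norm x)}"
    by auto
  ultimately show "{x\<in>space borel. y < nu (norm x)} \<in> sets (borel::'a measure)" by simp
qed

lemma emeasure_annulus:
  assumes "0 \<le> s" "s \<le> r"
  shows "emeasure lborel (ball (0::'a::euclidean_space) r - ball 0 s)
     = ennreal (unit_ball_vol (real DIM('a)) * (r ^ DIM('a) - s ^ DIM('a)))"
proof -
  have "emeasure lborel (ball (0::'a) r - ball 0 s) = emeasure lborel (ball (0::'a) r) - emeasure lborel (ball (0::'a) s)"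
    using assms emeasure_lborel_ball_finite[of "0::'a" s] by (intro emeasure_Diff) auto
  then show ?thesis
    using assms by (simp add: emeasure_ball ennreal_minus right_diff_distrib)
qed

lemma nn_integral_lborel_scaleR:
  fixes f :: "'a::euclidean_space \<Rightarrow> ennreal"
  assumes f[measurable]: "f \<in> borel_measurable borel" and c: "0 < c"
  shows "(\<integral>\<^sup>+x. f x \<partial>lborel) = ennreal (c ^ DIM('a)) * (\<integral>\<^sup>+x. f (c *\<^sub>R x) \<partial>lborel)"
proof -
  have "(\<integral>\<^sup>+x. f x \<partial>lborel) = (\<integral>\<^sup>+x. \<bar>c\<bar> ^ DIM('a) * f (0 + c *\<^sub>R x) \<partial>lborel)"
    using c by (subst lborel_affine[of c 0]) (auto simp: nn_integral_density nn_integral_distr)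
  then show ?thesis
    using c by (simp add: nn_integral_cmult ennreal_power)
qed

lemma set_nn_integral_ball_scaleR:
  fixes f :: "'a::euclidean_space \<Rightarrow> ennreal"
  assumes [measurable]: "f \<in> borel_measurable borel" and c: "0 < c"
  shows "(\<integral>\<^sup>+x \<in> ball 0 (c * r). f x \<partial>lborel)
     = ennreal (c ^ DIM('a)) * (\<integral>\<^sup>+x \<in> ball 0 r. f (c *\<^sub>R x) \<partial>lborel)"
proof -
  have "indicator (ball 0 (c * r)) (c *\<^sub>R x) = (indicator (ball 0 r) x :: ennreal)" for x :: 'a
    using c by (simp add: indicator_def)
  moreover have "(\<integral>\<^sup>+x \<in> ball 0 (c * r). f x \<partial>lborel)
      = ennreal (c ^ DIM('a)) * (\<integral>\<^sup>+x. f (c *\<^sub>R x) * indicator (ball 0 (c * r)) (c *\<^sub>R x) \<partial>lborel)"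
    by (rule nn_integral_lborel_scaleR[OF _ c]) (measurable, simp)
  ultimately show ?thesis by simp
qed

lemma set_nn_integral_ball_split:
  fixes f :: "'a::euclidean_space \<Rightarrow> ennreal"
  assumes [measurable]: "f \<in> borel_measurable borel" and "s \<le> r"
  shows "(\<integral>\<^sup>+x \<in> ball 0 r. f x \<partial>lborel)
     = (\<integral>\<^sup>+x \<in> ball 0 s. f x \<partial>lborel) + (\<integral>\<^sup>+x \<in> ball 0 r - ball 0 s. f x \<partial>lborel)"
proof -
  have "ball 0 r = ball (0::'a) s \<union> (ball 0 r - ball 0 s)"
    using assms(2) by auto
  moreover have "(\<integral>\<^sup>+x \<in> ball 0 s \<union> (ball 0 r - ball 0 s). f x \<partial>lborel)
      = (\<integral>\<^sup>+x \<in> ball 0 s. f x \<partial>lborel) + (\<integral>\<^sup>+x \<in> ball 0 r - ball 0 s. f x \<partial>lborel)"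
    by (rule nn_integral_disjoint_pair) auto
  ultimately show ?thesis by simp
qed

lemma annulus_integral_ge:
  fixes nu :: "real \<Rightarrow> ennreal"
  assumes nu: "antimono_on {0..} nu" and s: "0 \<le> s" "s \<le> r"
  shows "ennreal (s^2 * unit_ball_vol (real DIM('a)) * (r ^ DIM('a) - s ^ DIM('a))) * nu r
     \<le> (\<integral>\<^sup>+x \<in> ball (0::'a::euclidean_space) r - ball 0 s. ennreal (norm x ^ 2) * nu (norm x) \<partial>lborel)"
proof -
  have "s ^ DIM('a) \<le> r ^ DIM('a)"
    using s by (intro power_mono) auto
  then have "ennreal (s^2 * unit_ball_vol (real DIM('a)) * (r ^ DIM('a) - s ^ DIM('a))) * nu r
      = ennreal (s^2) * nu r * emeasure lborel (ball (0::'a) r - ball 0 s)"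
    using s by (simp add: emeasure_annulus ennreal_mult mult.assoc mult.commute[of "nu r"])
  also have "\<dots> = (\<integral>\<^sup>+x. ennreal (s^2) * nu r * indicator (ball (0::'a) r - ball 0 s) x \<partial>lborel)"
    by (rule nn_integral_cmult_indicator[symmetric]) simp
  also have "\<dots> \<le> (\<integral>\<^sup>+x \<in> ball (0::'a) r - ball 0 s. ennreal (norm x ^ 2) * nu (norm x) \<partial>lborel)"
  proof (intro nn_integral_mono)
    fix x :: 'a
    show "ennreal (s^2) * nu r * indicator (ball 0 r - ball 0 s) x
       \<le> ennreal (norm x ^ 2) * nu (norm x) * indicator (ball 0 r - ball 0 s) x"
    proof (cases "x \<in> ball 0 r - ball 0 s")
      case True
      then have "s^2 \<le> norm x ^ 2" "nu r \<le> nu (norm x)"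
        using s monotone_onD[OF nu, of "norm x" r] by (auto intro: power_mono)
      then show ?thesis by (auto intro!: mult_mono)
    qed simp
  qed
  finally show ?thesis .
qed

lemma annulus_integral_le:
  fixes nu :: "real \<Rightarrow> ennreal"
  assumes nu: "antimono_on {0..} nu" and s: "0 \<le> s" "s \<le> r"
  shows "(\<integral>\<^sup>+x \<in> ball (0::'a::euclidean_space) r - ball 0 s. ennreal (norm x ^ 2) * nu (norm x) \<partial>lborel)
     \<le> ennreal (unit_ball_vol (real DIM('a)) * r ^ (DIM('a) + 2)) * nu s"
proof -
  have "(\<integral>\<^sup>+x \<in> ball (0::'a) r - ball 0 s. ennreal (norm x ^ 2) * nu (norm x) \<partial>lborel)
      \<le> (\<integral>\<^sup>+x. ennreal (r^2) * nu s * indicator (ball (0::'a) r) x \<partial>lborel)"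
  proof (intro nn_integral_mono)
    fix x :: 'a
    show "ennreal (norm x ^ 2) * nu (norm x) * indicator (ball 0 r - ball 0 s) x
       \<le> ennreal (r^2) * nu s * indicator (ball 0 r) x"
    proof (cases "x \<in> ball 0 r - ball 0 s")
      case True
      then have "norm x ^ 2 \<le> r^2" "nu (norm x) \<le> nu s"
        using s monotone_onD[OF nu, of s "norm x"] by (auto intro: power_mono)
      then show ?thesis using True by (auto intro!: mult_mono)
    qed simp
  qed
  also have "\<dots> = ennreal (r^2) * nu s * emeasure lborel (ball (0::'a) r)"
    by (rule nn_integral_cmult_indicator) simp
  also have "\<dots> = ennreal (r^2 * (unit_ball_vol (real DIM('a)) * r ^ DIM('a))) * nu s"
    using s by (simp add: emeasure_ball ennreal_mult mult_ac)
  also have "\<dots> = ennreal (unit_ball_vol (real DIM('a)) * r ^ (DIM('a) + 2)) * nu s"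
    by (simp add: power_add power2_eq_square mult_ac)
  finally show ?thesis .
qed

section \<open>The truncated second moment\<close>

text \<open>The paper's r^2 K0(r); real-valued, as the integral is finite under \<open>levy_profile\<close>.\<close>

definition second_moment :: "'a::euclidean_space itself \<Rightarrow> (real \<Rightarrow> ennreal) \<Rightarrow> real \<Rightarrow> real" where
  "second_moment (_::'a itself) nu r =
     enn2real (\<integral>\<^sup>+ x \<in> ball (0::'a) r. ennreal (norm x ^ 2) * nu (norm x) \<partial>lborel)"

lemma levy_profile_antimono:
  "levy_profile TYPE('a::euclidean_space) nu \<Longrightarrow> antimono_on {0..} nu"
  by (auto simp: levy_profile_def monotone_on_def)

lemma levy_profile_measurable:
  "levy_profile TYPE('a::euclidean_space) nu \<Longrightarrow> (\<lambda>x::'a. nu (norm x)) \<in> borel_measurable borel"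
  by (intro borel_measurable_antimono_norm levy_profile_antimono)

lemma second_moment_integral_finite:
  assumes L: "levy_profile TYPE('a::euclidean_space) nu"
  shows "(\<integral>\<^sup>+x \<in> ball (0::'a) r. ennreal (norm x ^ 2) * nu (norm x) \<partial>lborel) < \<infinity>"
proof -
  note [measurable] = levy_profile_measurable[OF L]
  have "norm x ^ 2 \<le> max 1 (r^2) * min 1 (norm x ^ 2)" if "x \<in> ball 0 r" for x :: 'a
  proof -
    have "norm x ^ 2 \<le> r ^ 2" using that by (intro power_mono) auto
    then show ?thesis
      by (cases "norm x \<le> 1") (auto simp: power_le_one one_le_power mult_le_cancel_right1)
  qed
  then have "ennreal (norm x ^ 2) \<le> ennreal (max 1 (r^2)) * ennreal (min 1 (norm x ^ 2))"
    if "x \<in> ball 0 r" for x :: 'a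
    using that by (simp add: ennreal_mult[symmetric])
  then have pointwise: "ennreal (norm x ^ 2) * nu (norm x) * indicator (ball 0 r) x
      \<le> ennreal (max 1 (r^2)) * (ennreal (min 1 (norm x ^ 2)) * nu (norm x))" for x :: 'a
    by (cases "x \<in> ball 0 r") (auto simp: mult.assoc[symmetric] intro: mult_right_mono)
  have "(\<integral>\<^sup>+x \<in> ball (0::'a) r. ennreal (norm x ^ 2) * nu (norm x) \<partial>lborel)
      \<le> (\<integral>\<^sup>+x. ennreal (max 1 (r^2)) * (ennreal (min 1 (norm x ^ 2)) * nu (norm x)) \<partial>(lborel::'a measure))"
    by (intro nn_integral_mono pointwise)
  also have "\<dots> = ennreal (max 1 (r^2)) * (\<integral>\<^sup>+x. ennreal (min 1 (norm x ^ 2)) * nu (norm x) \<partial>(lborel::'a measure))"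
    by (intro nn_integral_cmult) measurable
  also have "\<dots> < \<infinity>"
    using L by (simp add: levy_profile_def ennreal_mult_less_top)
  finally show ?thesis .
qed

lemma second_moment_nonneg: "0 \<le> second_moment A nu r"
  by (simp add: second_moment_def)

lemma ennreal_second_moment:
  assumes "levy_profile TYPE('a::euclidean_space) nu"
  shows "ennreal (second_moment TYPE('a) nu r)
     = (\<integral>\<^sup>+x \<in> ball (0::'a) r. ennreal (norm x ^ 2) * nu (norm x) \<partial>lborel)"
  using second_moment_integral_finite[OF assms, of r] by (simp add: second_moment_def less_top)

lemma K0_eq_second_moment:
  "levy_profile TYPE('a::euclidean_space) nu \<Longrightarrow>
    K0 TYPE('a) nu r = ennreal (second_moment TYPE('a) nu r / r^2)"
  by (simp add: K0_def ennreal_second_moment[symmetric] ennreal_mult'[symmetric])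

lemma annulus_integral_eq_second_moment_diff:
  assumes L: "levy_profile TYPE('a::euclidean_space) nu" and "s \<le> r"
  shows "(\<integral>\<^sup>+x \<in> ball (0::'a) r - ball 0 s. ennreal (norm x ^ 2) * nu (norm x) \<partial>lborel)
     = ennreal (second_moment TYPE('a) nu r - second_moment TYPE('a) nu s)"
proof -
  note [measurable] = levy_profile_measurable[OF L]
  let ?A = "\<integral>\<^sup>+x \<in> ball (0::'a) r - ball 0 s. ennreal (norm x ^ 2) * nu (norm x) \<partial>lborel"
  have "ennreal (second_moment TYPE('a) nu r) = ennreal (second_moment TYPE('a) nu s) + ?A"
    unfolding ennreal_second_moment[OF L]
    by (rule set_nn_integral_ball_split[OF _ \<open>s \<le> r\<close>]) measurable
  then have "?A = ennreal (second_moment TYPE('a) nu r) - ennreal (second_moment TYPE('a) nu s)"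
    by (simp add: ennreal_add_diff_cancel_left)
  then show ?thesis
    by (simp add: second_moment_nonneg ennreal_minus)
qed

lemma nu_finite:
  assumes L: "levy_profile TYPE('a::euclidean_space) nu" and t: "0 < t"
  shows "nu t < \<infinity>"
proof (rule ccontr)
  define P where "P = (t/2)^2 * unit_ball_vol (real DIM('a)) * (t ^ DIM('a) - (t/2) ^ DIM('a))"
  assume "\<not> nu t < \<infinity>"
  moreover have "0 < P"
    unfolding P_def using t power_strict_mono[of "t/2" t "DIM('a)"] by simp
  ultimately have "ennreal P * nu t = \<infinity>"
    by (simp add: less_top[symmetric] ennreal_mult_eq_top_iff)
  moreover have "ennreal P * nu t \<le> ennreal (second_moment TYPE('a) nu t - second_moment TYPE('a) nu (t/2))"
    unfolding P_def using annulus_integral_ge[OF levy_profile_antimono[OF L], of "t/2" t, where 'a='a]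
      annulus_integral_eq_second_moment_diff[OF L, of "t/2" t] t by simp
  ultimately show False by (simp add: top_unique)
qed

lemma ennreal_enn2real_nu:
  assumes "levy_profile TYPE('a::euclidean_space) nu" "0 < t"
  shows "ennreal (enn2real (nu t)) = nu t"
  using nu_finite[OF assms] by (simp add: less_top)

lemma second_moment_mono:
  assumes L: "levy_profile TYPE('a::euclidean_space) nu" and "s \<le> r"
  shows "second_moment TYPE('a) nu s \<le> second_moment TYPE('a) nu r"
  unfolding second_moment_def
  using second_moment_integral_finite[OF L, of r] \<open>s \<le> r\<close>
  by (intro enn2real_mono nn_integral_mono) (auto split: split_indicator)

lemma second_moment_diff_ge:
  assumes L: "levy_profile TYPE('a::euclidean_space) nu" and s: "0 < s" "s \<le> r"
  shows "s^2 * unit_ball_vol (real DIM('a)) * (r ^ DIM('a) - s ^ DIM('a)) * enn2real (nu r)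
     \<le> second_moment TYPE('a) nu r - second_moment TYPE('a) nu s"
proof -
  define P where "P = s^2 * unit_ball_vol (real DIM('a)) * (r ^ DIM('a) - s ^ DIM('a))"
  have "0 \<le> P"
    unfolding P_def using s power_mono[of s r "DIM('a)"] by simp
  then have "ennreal (P * enn2real (nu r)) = ennreal P * nu r"
    using ennreal_enn2real_nu[OF L, of r] s by (simp add: ennreal_mult')
  also have "\<dots> \<le> ennreal (second_moment TYPE('a) nu r - second_moment TYPE('a) nu s)"
    unfolding P_def using annulus_integral_ge[OF levy_profile_antimono[OF L], of s r, where 'a='a]
      annulus_integral_eq_second_moment_diff[OF L s(2)] s by simp
  finally show ?thesis
    unfolding P_def[symmetric] using second_moment_mono[OF L s(2)] by (simp add: ennreal_le_iff)
qed

lemma second_moment_diff_le: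
  assumes L: "levy_profile TYPE('a::euclidean_space) nu" and s: "0 < s" "s \<le> r"
  shows "second_moment TYPE('a) nu r - second_moment TYPE('a) nu s
     \<le> unit_ball_vol (real DIM('a)) * r ^ (DIM('a) + 2) * enn2real (nu s)"
proof -
  have "ennreal (second_moment TYPE('a) nu r - second_moment TYPE('a) nu s)
      \<le> ennreal (unit_ball_vol (real DIM('a)) * r ^ (DIM('a) + 2)) * ennreal (enn2real (nu s))"
    using annulus_integral_le[OF levy_profile_antimono[OF L], of s r, where 'a='a]
      annulus_integral_eq_second_moment_diff[OF L s(2)] ennreal_enn2real_nu[OF L s(1)] s by simp
  then show ?thesis
    using s by (simp add: ennreal_mult'[symmetric] ennreal_le_iff)
qed

lemma cond_i_iff_second_moment:
  assumes L: "levy_profile TYPE('a::euclidean_space) nu" and c: "0 \<le> c"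
  shows "cond_i TYPE('a) nu T c \<longleftrightarrow> (\<forall>r. 0 < r \<and> ereal r < T \<longrightarrow>
    c * second_moment TYPE('a) nu r \<le> r ^ (DIM('a) + 2) * enn2real (nu r))"
proof -
  have "ennreal (c * r powr - real DIM('a)) * K0 TYPE('a) nu r \<le> nu r
      \<longleftrightarrow> c * second_moment TYPE('a) nu r \<le> r ^ (DIM('a) + 2) * enn2real (nu r)"
    if r: "0 < r" for r
  proof -
    have "c * r powr - real DIM('a) * (second_moment TYPE('a) nu r / r^2)
        = c * second_moment TYPE('a) nu r / r ^ (DIM('a) + 2)"
      using r by (simp add: powr_minus powr_realpow power_add power2_eq_square divide_inverse mult_ac)
    moreover have "0 \<le> c * r powr - real DIM('a)" using c by simp
    ultimately have "ennreal (c * r powr - real DIM('a)) * K0 TYPE('a) nu r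
        = ennreal (c * second_moment TYPE('a) nu r / r ^ (DIM('a) + 2))"
      by (simp add: K0_eq_second_moment[OF L] ennreal_mult'[symmetric])
    then show ?thesis
      using r by (subst (1) ennreal_enn2real_nu[OF L r, symmetric])
        (simp add: ennreal_le_iff pos_divide_le_eq mult.commute)
  qed
  then show ?thesis unfolding cond_i_def by auto
qed

lemma K0_scaled_le_iff:
  assumes L: "levy_profile TYPE('a::euclidean_space) nu" and a: "0 \<le> a"
  shows "ennreal a * K0 TYPE('a) nu s \<le> K0 TYPE('a) nu r
    \<longleftrightarrow> a * (second_moment TYPE('a) nu s / s^2) \<le> second_moment TYPE('a) nu r / r^2"
  using a by (simp add: K0_eq_second_moment[OF L] ennreal_mult'[symmetric] second_moment_nonneg)

lemma nu_scaled_le_iff: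
  assumes L: "levy_profile TYPE('a::euclidean_space) nu" and a: "0 \<le> a" and "0 < s" "0 < r"
  shows "ennreal a * nu s \<le> nu r \<longleftrightarrow> a * enn2real (nu s) \<le> enn2real (nu r)"
proof -
  have "ennreal a * nu s = ennreal (a * enn2real (nu s))"
    using a ennreal_enn2real_nu[OF L \<open>0 < s\<close>] by (simp add: ennreal_mult')
  then show ?thesis
    by (subst (1) ennreal_enn2real_nu[OF L \<open>0 < r\<close>, symmetric]) (simp add: ennreal_le_iff)
qed

section \<open>Condition (i) implies (ii) and (iii)\<close>

lemma one_minus_mult_le_powr:
  fixes a \<mu> :: real and d :: nat
  assumes a: "0 < a" and \<mu>: "1/2 \<le> \<mu>" "\<mu> \<le> 1" and d: "1 \<le> d"
  shows "1 - a * \<mu>^2 * (1 - \<mu>^d) \<le> \<mu> powr min 1 (a/8)"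
proof -
  define \<alpha> where "\<alpha> = min 1 (a/8)"
  have \<alpha>: "0 < \<alpha>" "2 * \<alpha> \<le> a/4" using a unfolding \<alpha>_def by auto
  have "ln \<mu> \<ge> 1 - 1/\<mu>"
    using ln_le_minus_one[of "1/\<mu>"] \<mu> by (simp add: ln_div)
  moreover have "1 - 1/\<mu> \<ge> -2 * (1 - \<mu>)"
    using \<mu> mult_nonneg_nonneg[of "1 - \<mu>" "2 * \<mu> - 1"] by (simp add: field_simps)
  ultimately have "\<alpha> * ln \<mu> \<ge> \<alpha> * (-2 * (1 - \<mu>))"
    using \<alpha> by (intro mult_left_mono) auto
  moreover have "\<mu> powr \<alpha> \<ge> 1 + \<alpha> * ln \<mu>"
    using \<mu> exp_ge_add_one_self[of "\<alpha> * ln \<mu>"] by (simp add: powr_def)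
  moreover have "a * (1/4) * (1 - \<mu>) \<le> a * \<mu>^2 * (1 - \<mu>^d)"
    using power_mono[OF \<mu>(1), of 2] power_decreasing[OF d, of \<mu>] a \<mu>
    by (intro mult_mono) (auto simp: power2_eq_square)
  moreover have "2 * \<alpha> * (1 - \<mu>) \<le> a/4 * (1 - \<mu>)"
    using \<alpha> \<mu> by (intro mult_right_mono) auto
  ultimately show ?thesis unfolding \<alpha>_def by linarith
qed

definition decay_exponent :: "'a::euclidean_space itself \<Rightarrow> real \<Rightarrow> real" where
  "decay_exponent (_::'a itself) c = min 1 (unit_ball_vol (real DIM('a)) * c / 8)"

lemma decay_exponent_bounds:
  assumes "0 < c"
  shows "0 < decay_exponent TYPE('a::euclidean_space) c" "decay_exponent TYPE('a) c \<le> 1"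
  using assms by (simp_all add: decay_exponent_def)

lemma second_moment_decay_step:
  assumes L: "levy_profile TYPE('a::euclidean_space) nu" and C: "cond_i TYPE('a) nu T c"
    and c: "0 < c" and \<mu>: "1/2 \<le> \<mu>" "\<mu> \<le> 1" and r: "0 < r" "ereal r < T"
  shows "second_moment TYPE('a) nu (\<mu> * r)
     \<le> \<mu> powr decay_exponent TYPE('a) c * second_moment TYPE('a) nu r"
proof -
  define V where "V = unit_ball_vol (real DIM('a))"
  define d where "d = DIM('a)"
  let ?M = "second_moment TYPE('a) nu" and ?\<nu> = "enn2real (nu r)"
  have "1 \<le> d" "0 < V" unfolding d_def V_def by (simp_all add: DIM_positive Suc_le_eq)
  have "\<mu> ^ d \<le> 1" using \<mu> by (simp add: power_le_one)
  \<comment> \<open>By (i), the annulus \<mu>r < |x| < r carries at least the fraction V c \<mu>^2 (1 - \<mu>^d) of M(r).\<close>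
  have "c * ?M r \<le> r ^ (d + 2) * ?\<nu>"
    using cond_i_iff_second_moment[OF L, of c T] C c r unfolding d_def by auto
  then have "(V * \<mu>^2 * (1 - \<mu>^d)) * (c * ?M r) \<le> (V * \<mu>^2 * (1 - \<mu>^d)) * (r ^ (d + 2) * ?\<nu>)"
    using \<open>0 < V\<close> \<open>\<mu> ^ d \<le> 1\<close> by (intro mult_left_mono) auto
  then have "V * c * \<mu>^2 * (1 - \<mu>^d) * ?M r \<le> V * \<mu>^2 * (1 - \<mu>^d) * (r ^ (d + 2) * ?\<nu>)"
    by (simp add: mult_ac)
  also have "\<dots> = (\<mu> * r)^2 * V * (r ^ d - (\<mu> * r) ^ d) * ?\<nu>"
    by (simp add: power_mult_distrib power_add power2_eq_square algebra_simps)
  also have "\<dots> \<le> ?M r - ?M (\<mu> * r)"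
    using second_moment_diff_ge[OF L, of "\<mu> * r" r] \<mu> r
    unfolding V_def d_def by (simp add: mult_le_cancel_right1)
  finally have "?M (\<mu> * r) \<le> (1 - V * c * \<mu>^2 * (1 - \<mu>^d)) * ?M r"
    by (simp add: algebra_simps)
  also have "\<dots> \<le> \<mu> powr decay_exponent TYPE('a) c * ?M r"
    using one_minus_mult_le_powr[of "V * c" \<mu> d] \<open>1 \<le> d\<close> \<open>0 < V\<close> c \<mu>
    unfolding decay_exponent_def V_def
    by (intro mult_right_mono) (simp_all add: second_moment_nonneg)
  finally show ?thesis .
qed

lemma second_moment_decay:
  assumes L: "levy_profile TYPE('a::euclidean_space) nu" and C: "cond_i TYPE('a) nu T c"
    and c: "0 < c" and l: "0 < l" "l \<le> 1" and r: "0 < r" "ereal r < T"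
  shows "second_moment TYPE('a) nu (l * r)
     \<le> l powr decay_exponent TYPE('a) c * second_moment TYPE('a) nu r"
proof -
  let ?M = "second_moment TYPE('a) nu" and ?\<alpha> = "decay_exponent TYPE('a) c"
  have "?M (l * r) \<le> l powr ?\<alpha> * ?M r"
    if "(1/2)^k \<le> l" "l \<le> 1" "0 < r" "ereal r < T" for k l r
    using that
  proof (induction k arbitrary: l r)
    case 0
    then show ?case using second_moment_decay_step[OF L C c] by simp
  next
    case (Suc k)
    show ?case
    proof (cases "1/2 \<le> l")
      case True
      then show ?thesis using second_moment_decay_step[OF L C c] Suc.prems by simp
    next
      case False
      have "0 < l" using Suc.prems(1) by (rule less_le_trans[rotated]) simp
      have "?M (l * r) = ?M ((2 * l) * (r / 2))" by simp
      also have "\<dots> \<le> (2 * l) powr ?\<alpha> * ?M (r / 2)"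
        using Suc.IH[of "2 * l" "r / 2"] Suc.prems False
        by (simp add: le_less_trans[of "ereal (r/2)" "ereal r"])
      also have "\<dots> \<le> (2 * l) powr ?\<alpha> * ((1/2) powr ?\<alpha> * ?M r)"
        using second_moment_decay_step[OF L C c, of "1/2" r] Suc.prems
        by (intro mult_left_mono) simp_all
      also have "\<dots> = l powr ?\<alpha> * ?M r"
        using \<open>0 < l\<close> by (simp add: powr_mult[symmetric])
      finally show ?thesis .
    qed
  qed
  moreover obtain k where "(1/2::real)^k < l"
    using real_arch_pow_inv[of l "1/2"] l by auto
  ultimately show ?thesis using l r by (meson less_imp_le)
qed

lemma nu_le_second_moment:
  assumes L: "levy_profile TYPE('a::euclidean_space) nu" and s: "0 < s"
  shows "unit_ball_vol (real DIM('a)) * s ^ (DIM('a) + 2) * enn2real (nu s)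
     \<le> 8 * second_moment TYPE('a) nu s"
proof -
  define V where "V = unit_ball_vol (real DIM('a))"
  define d where "d = DIM('a)"
  have "0 < V" "1 \<le> d" unfolding V_def d_def by (simp_all add: DIM_positive Suc_le_eq)
  have "(1/2::real) ^ d \<le> 1/2"
    using power_decreasing[OF \<open>1 \<le> d\<close>, of "1/2::real"] by simp
  then have "V * s ^ d / 2 \<le> V * (s ^ d - (s/2) ^ d)"
    using \<open>0 < V\<close> s by (simp add: power_divide field_simps)
  have "V * s ^ (d + 2) * enn2real (nu s) / 8 = (s/2)^2 * (V * s ^ d / 2) * enn2real (nu s)"
    by (simp add: power_add power2_eq_square field_simps)
  also have "\<dots> \<le> (s/2)^2 * (V * (s ^ d - (s/2) ^ d)) * enn2real (nu s)"
    using \<open>V * s ^ d / 2 \<le> V * (s ^ d - (s/2) ^ d)\<close> by (intro mult_right_mono mult_left_mono) auto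
  also have "\<dots> = (s/2)^2 * V * (s ^ d - (s/2) ^ d) * enn2real (nu s)"
    by (simp only: mult.assoc)
  also have "\<dots> \<le> second_moment TYPE('a) nu s - second_moment TYPE('a) nu (s/2)"
    using second_moment_diff_ge[OF L, of "s/2" s] s unfolding V_def d_def by simp
  also have "\<dots> \<le> second_moment TYPE('a) nu s"
    by (simp add: second_moment_nonneg)
  finally show ?thesis unfolding V_def d_def by simp
qed

lemma cond_i_imp_cond_ii:
  assumes L: "levy_profile TYPE('a::euclidean_space) nu" and C: "cond_i TYPE('a) nu T c"
    and c: "0 < c"
  shows "cond_ii TYPE('a) nu T 1 (2 - decay_exponent TYPE('a) c)"
  unfolding cond_ii_def
proof (intro allI impI, elim conjE)
  fix l r :: real assume l: "0 < l" "l \<le> 1" and r: "0 < r" "ereal r < T"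
  let ?\<alpha> = "decay_exponent TYPE('a) c" and ?M = "second_moment TYPE('a) nu"
  have "l powr (2 - ?\<alpha>) * (?M (l * r) / (l * r)^2)
      \<le> l powr (2 - ?\<alpha>) * (l powr ?\<alpha> * ?M r / (l * r)^2)"
    using second_moment_decay[OF L C c l r] by (intro mult_left_mono divide_right_mono) auto
  also have "\<dots> = (l powr (2 - ?\<alpha>) * l powr ?\<alpha>) * ?M r / (l^2 * r^2)"
    by (simp add: power_mult_distrib mult.assoc)
  also have "l powr (2 - ?\<alpha>) * l powr ?\<alpha> = l^2"
    using l by (simp add: powr_add[symmetric])
  also have "l^2 * ?M r / (l^2 * r^2) = ?M r / r^2"
    using l by simp
  finally show "ennreal (1 * l powr (2 - ?\<alpha>)) * K0 TYPE('a) nu (l * r) \<le> K0 TYPE('a) nu r"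
    using K0_scaled_le_iff[OF L] by simp
qed

lemma cond_i_imp_cond_iii:
  assumes L: "levy_profile TYPE('a::euclidean_space) nu" and C: "cond_i TYPE('a) nu T c"
    and c: "0 < c"
  shows "cond_iii TYPE('a) nu T (decay_exponent TYPE('a) c) (2 - decay_exponent TYPE('a) c)"
  unfolding cond_iii_def
proof (intro allI impI, elim conjE)
  fix l r :: real assume l: "0 < l" "l \<le> 1" and r: "0 < r" "ereal r < T"
  let ?\<alpha> = "decay_exponent TYPE('a) c" and ?M = "second_moment TYPE('a) nu"
  define V where "V = unit_ball_vol (real DIM('a))"
  define d where "d = DIM('a)"
  define P where "P = l powr (real d + (2 - ?\<alpha>))"
  let ?\<nu> = "enn2real (nu r)" and ?\<nu>' = "enn2real (nu (l * r))"
  have "0 < V" "0 \<le> P" unfolding V_def P_def by simp_all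
  have "P * l powr ?\<alpha> = l powr real (d + 2)"
    unfolding P_def by (simp add: powr_add[symmetric] add.commute)
  also have "\<dots> = l ^ (d + 2)"
    using l(1) by (rule powr_realpow)
  finally have "(l powr ?\<alpha> * r ^ (d + 2)) * (c * V * P * ?\<nu>') = c * (V * (l * r) ^ (d + 2) * ?\<nu>')"
    by (simp add: power_mult_distrib mult_ac)
  also have "\<dots> \<le> c * (8 * (l powr ?\<alpha> * ?M r))"
    using nu_le_second_moment[OF L, of "l * r"] second_moment_decay[OF L C c l r] c l r
    unfolding V_def d_def by (intro mult_left_mono) auto
  also have "\<dots> = 8 * l powr ?\<alpha> * (c * ?M r)"
    by simp
  also have "\<dots> \<le> 8 * l powr ?\<alpha> * (r ^ (d + 2) * ?\<nu>)"
    using cond_i_iff_second_moment[OF L, of c T] C c r unfolding d_def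
    by (intro mult_left_mono) auto
  also have "\<dots> = (l powr ?\<alpha> * r ^ (d + 2)) * (8 * ?\<nu>)"
    by simp
  finally have "c * V * P * ?\<nu>' \<le> 8 * ?\<nu>"
    using l r by (simp add: mult_le_cancel_left_pos)
  moreover have "?\<alpha> * P * ?\<nu>' \<le> (V * c / 8) * P * ?\<nu>'"
    using \<open>0 \<le> P\<close> unfolding decay_exponent_def V_def by (intro mult_right_mono) auto
  ultimately have "?\<alpha> * P * ?\<nu>' \<le> ?\<nu>"
    by (simp add: mult_ac)
  then show "ennreal (?\<alpha> * l powr (real DIM('a) + (2 - ?\<alpha>))) * nu (l * r) \<le> nu r"
    using nu_scaled_le_iff[OF L _ _ r(1), of "?\<alpha> * P" "l * r"] decay_exponent_bounds[OF c, where 'a='a] l r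
    unfolding P_def d_def by simp
qed

section \<open>Conditions (ii) and (iii) imply (i)\<close>

text \<open>The ratio \<rho> with \<rho>^(2-\<beta>) = c/2: under (ii) or (iii) the second moment at least doubles
  from radius \<rho>r to radius r.\<close>

definition doubling_ratio :: "real \<Rightarrow> real \<Rightarrow> real" where
  "doubling_ratio c \<beta> = (c / 2) powr (1 / (2 - \<beta>))"

lemma doubling_ratio_bounds:
  assumes "0 < c" "c < 2" "\<beta> < 2"
  shows "0 < doubling_ratio c \<beta>" "doubling_ratio c \<beta> < 1"
  using assms powr_less_mono2[of "1 / (2 - \<beta>)" "c/2" 1]
  by (simp_all add: doubling_ratio_def)

lemma doubling_ratio_power:
  assumes "0 < c" "\<beta> < 2"
  shows "doubling_ratio c \<beta> ^ n = c / 2 * doubling_ratio c \<beta> powr (real n - 2 + \<beta>)"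
proof -
  have "doubling_ratio c \<beta> ^ n = doubling_ratio c \<beta> powr ((real n - 2 + \<beta>) + (2 - \<beta>))"
    using assms by (simp add: doubling_ratio_def powr_realpow)
  also have "\<dots> = c / 2 * doubling_ratio c \<beta> powr (real n - 2 + \<beta>)"
    using assms by (simp only: powr_add) (simp add: doubling_ratio_def powr_powr)
  finally show ?thesis .
qed

lemma second_moment_le_of_doubling:
  assumes L: "levy_profile TYPE('a::euclidean_space) nu" and s: "0 < s" "s \<le> r"
    and doubling: "2 * second_moment TYPE('a) nu s \<le> second_moment TYPE('a) nu r"
  shows "second_moment TYPE('a) nu r \<le> 2 * unit_ball_vol (real DIM('a)) * r ^ (DIM('a) + 2) * enn2real (nu s)"
  using second_moment_diff_le[OF L s] doubling by linarith

lemma second_moment_scaled_le: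
  assumes L: "levy_profile TYPE('a::euclidean_space) nu" and C: "cond_iii TYPE('a) nu T c \<beta>"
    and c: "0 \<le> c" and \<rho>: "0 < \<rho>" "\<rho> \<le> 1" and r: "ereal r < T"
  shows "c * \<rho> powr (real DIM('a) + \<beta>) * second_moment TYPE('a) nu (\<rho> * r)
     \<le> \<rho> ^ (DIM('a) + 2) * second_moment TYPE('a) nu r"
proof -
  note [measurable] = levy_profile_measurable[OF L]
  define K where "K = c * \<rho> powr (real DIM('a) + \<beta>)"
  have "0 \<le> K" unfolding K_def using c by simp
  let ?g = "\<lambda>x::'a. ennreal (norm x ^ 2) * nu (norm x)"
  have pointwise: "ennreal K * (?g (\<rho> *\<^sub>R x) * indicator (ball 0 r) x)
      \<le> ennreal (\<rho>^2) * (?g x * indicator (ball 0 r) x)" for x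
  proof (cases "x \<in> ball 0 r \<and> x \<noteq> 0")
    case True
    then have "0 < norm x" "ereal (norm x) < T"
      using r by (auto intro: le_less_trans[of _ "ereal r"])
    then have "ennreal K * nu (\<rho> * norm x) \<le> nu (norm x)"
      using C \<rho> unfolding cond_iii_def K_def by auto
    then have "ennreal (\<rho>^2 * norm x ^ 2) * (ennreal K * nu (\<rho> * norm x))
        \<le> ennreal (\<rho>^2 * norm x ^ 2) * nu (norm x)"
      by (rule mult_left_mono) simp
    then show ?thesis
      using True \<rho> by (simp add: power_mult_distrib ennreal_mult mult_ac)
  qed auto
  have "ennreal (second_moment TYPE('a) nu (\<rho> * r))
      = ennreal (\<rho> ^ DIM('a)) * (\<integral>\<^sup>+x \<in> ball 0 r. ?g (\<rho> *\<^sub>R x) \<partial>lborel)"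
    unfolding ennreal_second_moment[OF L] by (rule set_nn_integral_ball_scaleR[OF _ \<rho>(1)]) measurable
  moreover have "(\<integral>\<^sup>+x. ennreal K * (?g (\<rho> *\<^sub>R x) * indicator (ball 0 r) x) \<partial>lborel)
      = ennreal K * (\<integral>\<^sup>+x \<in> ball 0 r. ?g (\<rho> *\<^sub>R x) \<partial>lborel)"
    by (rule nn_integral_cmult) (measurable, simp)
  ultimately have "ennreal K * ennreal (second_moment TYPE('a) nu (\<rho> * r))
      = ennreal (\<rho> ^ DIM('a)) * (\<integral>\<^sup>+x. ennreal K * (?g (\<rho> *\<^sub>R x) * indicator (ball 0 r) x) \<partial>lborel)"
    by (simp add: mult_ac)
  also have "\<dots> \<le> ennreal (\<rho> ^ DIM('a)) * (\<integral>\<^sup>+x. ennreal (\<rho>^2) * (?g x * indicator (ball 0 r) x) \<partial>lborel)"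
    by (intro mult_left_mono nn_integral_mono pointwise) simp
  also have "\<dots> = ennreal (\<rho> ^ (DIM('a) + 2)) * ennreal (second_moment TYPE('a) nu r)"
  proof -
    have pow: "ennreal (\<rho> ^ DIM('a)) * ennreal (\<rho>^2) = ennreal (\<rho> ^ (DIM('a) + 2))"
      using \<rho> by (simp add: ennreal_mult'[symmetric] power_add power2_eq_square)
    have "(\<integral>\<^sup>+x. ennreal (\<rho>^2) * (?g x * indicator (ball 0 r) x) \<partial>lborel)
        = ennreal (\<rho>^2) * (\<integral>\<^sup>+x \<in> ball 0 r. ?g x \<partial>lborel)"
      by (rule nn_integral_cmult) (measurable, simp)
    then show ?thesis
      unfolding ennreal_second_moment[OF L] by (simp only: mult.assoc[symmetric] pow)
  qed
  finally show ?thesis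
    unfolding K_def[symmetric] using \<open>0 \<le> K\<close> \<rho>
    by (simp add: ennreal_mult'[symmetric] second_moment_nonneg ennreal_le_iff)
qed

lemma cond_ii_doubling:
  assumes L: "levy_profile TYPE('a::euclidean_space) nu" and C: "cond_ii TYPE('a) nu T c \<beta>"
    and c: "0 < c" "c < 2" and \<beta>: "\<beta> < 2" and R: "0 < R" "ereal R < T"
  shows "2 * second_moment TYPE('a) nu (doubling_ratio c \<beta> * R) \<le> second_moment TYPE('a) nu R"
proof -
  let ?\<rho> = "doubling_ratio c \<beta>" and ?M = "second_moment TYPE('a) nu"
  have \<rho>: "0 < ?\<rho>" "?\<rho> < 1" using doubling_ratio_bounds[OF c \<beta>] by auto
  have \<rho>2: "?\<rho> ^ 2 = c / 2 * ?\<rho> powr \<beta>"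
    using doubling_ratio_power[OF c(1) \<beta>, of 2] by simp
  have "ennreal (c * ?\<rho> powr \<beta>) * K0 TYPE('a) nu (?\<rho> * R) \<le> K0 TYPE('a) nu R"
    using C \<rho> R unfolding cond_ii_def by (simp add: less_imp_le)
  then have "c * ?\<rho> powr \<beta> * (?M (?\<rho> * R) / (?\<rho> * R)^2) \<le> ?M R / R^2"
    using K0_scaled_le_iff[OF L, of "c * ?\<rho> powr \<beta>"] c by simp
  moreover have "c * ?\<rho> powr \<beta> * (?M (?\<rho> * R) / (?\<rho> * R)^2) = 2 * ?M (?\<rho> * R) / R^2"
    using c \<rho> unfolding power_mult_distrib \<rho>2 by (simp add: field_simps)
  ultimately show ?thesis
    using R by (simp add: divide_le_cancel)
qed

lemma cond_iii_doubling:
  assumes L: "levy_profile TYPE('a::euclidean_space) nu" and C: "cond_iii TYPE('a) nu T c \<beta>"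
    and c: "0 < c" "c < 2" and \<beta>: "\<beta> < 2" and r: "ereal r < T"
  shows "2 * second_moment TYPE('a) nu (doubling_ratio c \<beta> * r) \<le> second_moment TYPE('a) nu r"
proof -
  let ?\<rho> = "doubling_ratio c \<beta>" and ?M = "second_moment TYPE('a) nu"
  define K where "K = c * ?\<rho> powr (real DIM('a) + \<beta>)"
  have \<rho>: "0 < ?\<rho>" "?\<rho> < 1" using doubling_ratio_bounds[OF c \<beta>] by auto
  then have "0 < K" unfolding K_def using c by simp
  have \<rho>_pow: "?\<rho> ^ (DIM('a) + 2) = K / 2"
    using doubling_ratio_power[OF c(1) \<beta>, of "DIM('a) + 2"] unfolding K_def by simp
  have "K * ?M (?\<rho> * r) \<le> ?\<rho> ^ (DIM('a) + 2) * ?M r"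
    using second_moment_scaled_le[OF L C _ \<rho>(1) _ r] c \<rho> unfolding K_def by simp
  then have "K * ?M (?\<rho> * r) \<le> K * (?M r / 2)"
    unfolding \<rho>_pow by simp
  then show ?thesis
    using \<open>0 < K\<close> by simp
qed

lemma ereal_div_less_of_less_mult:
  assumes "0 < \<rho>" "ereal r < ereal \<rho> * T"
  shows "ereal (r / \<rho>) < T"
  using assms by (cases T) (auto simp: field_simps)

lemma cond_ii_imp_cond_i:
  assumes L: "levy_profile TYPE('a::euclidean_space) nu" and C: "cond_ii TYPE('a) nu T c \<beta>"
    and c: "0 < c" "c < 2" and \<beta>: "\<beta> < 2"
  shows "cond_i TYPE('a) nu (ereal (doubling_ratio c \<beta>) * T)
    (doubling_ratio c \<beta> ^ (DIM('a) + 2) / unit_ball_vol (real DIM('a)))"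
proof -
  define V where "V = unit_ball_vol (real DIM('a))"
  define d where "d = DIM('a)"
  let ?\<rho> = "doubling_ratio c \<beta>" and ?M = "second_moment TYPE('a) nu"
  have \<rho>: "0 < ?\<rho>" "?\<rho> < 1" using doubling_ratio_bounds[OF c \<beta>] by auto
  have "0 < V" unfolding V_def by simp
  have "?\<rho> ^ (d + 2) / V * ?M r \<le> r ^ (d + 2) * enn2real (nu r)"
    if r: "0 < r" "ereal r < ereal ?\<rho> * T" for r
  proof -
    define R where "R = r / ?\<rho>"
    have R: "0 < R" "ereal R < T" "?\<rho> * R = r" "r \<le> R"
      using ereal_div_less_of_less_mult[OF \<rho>(1) r(2)] r \<rho> unfolding R_def
      by (auto simp: field_simps)
    have "2 * ?M r \<le> ?M R"
      using cond_ii_doubling[OF L C c \<beta> R(1,2)] R(3) by simp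
    moreover have "?M R \<le> 2 * V * R ^ (d + 2) * enn2real (nu r)"
      using second_moment_le_of_doubling[OF L r(1) R(4)] \<open>2 * ?M r \<le> ?M R\<close>
      unfolding V_def d_def by simp
    ultimately have "?M r \<le> V * R ^ (d + 2) * enn2real (nu r)"
      by linarith
    also have "\<dots> = V * r ^ (d + 2) * enn2real (nu r) / ?\<rho> ^ (d + 2)"
      unfolding R_def by (simp add: power_divide)
    finally show ?thesis
      using \<rho> \<open>0 < V\<close> by (simp add: field_simps)
  qed
  then show ?thesis
    using cond_i_iff_second_moment[OF L] \<rho> \<open>0 < V\<close> unfolding V_def d_def by auto
qed

lemma cond_iii_imp_cond_i:
  assumes L: "levy_profile TYPE('a::euclidean_space) nu" and C: "cond_iii TYPE('a) nu T c \<beta>"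
    and c: "0 < c" "c < 2" and \<beta>: "\<beta> < 2"
  shows "cond_i TYPE('a) nu T
    (c * doubling_ratio c \<beta> powr (real DIM('a) + \<beta>) / (2 * unit_ball_vol (real DIM('a))))"
proof -
  define V where "V = unit_ball_vol (real DIM('a))"
  define d where "d = DIM('a)"
  let ?\<rho> = "doubling_ratio c \<beta>" and ?M = "second_moment TYPE('a) nu"
  define K where "K = c * ?\<rho> powr (real d + \<beta>)"
  have \<rho>: "0 < ?\<rho>" "?\<rho> < 1" using doubling_ratio_bounds[OF c \<beta>] by auto
  have "0 < V" "0 < K" unfolding V_def K_def using c \<rho> by simp_all
  have "K / (2 * V) * ?M r \<le> r ^ (d + 2) * enn2real (nu r)"
    if r: "0 < r" "ereal r < T" for r
  proof -
    have \<rho>r: "0 < ?\<rho> * r" "?\<rho> * r \<le> r" using \<rho> r by auto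
    have "?M r \<le> 2 * V * r ^ (d + 2) * enn2real (nu (?\<rho> * r))"
      using second_moment_le_of_doubling[OF L \<rho>r cond_iii_doubling[OF L C c \<beta> r(2)]]
      unfolding V_def d_def .
    moreover have "K * enn2real (nu (?\<rho> * r)) \<le> enn2real (nu r)"
      using C \<rho> r nu_scaled_le_iff[OF L _ \<rho>r(1) r(1), of K] \<open>0 < K\<close>
      unfolding cond_iii_def K_def d_def by auto
    ultimately have "K * ?M r \<le> 2 * V * r ^ (d + 2) * (K * enn2real (nu (?\<rho> * r)))"
      using \<open>0 < K\<close> by (simp add: mult_left_mono mult_ac)
    also have "\<dots> \<le> 2 * V * r ^ (d + 2) * enn2real (nu r)"
      using \<open>K * enn2real (nu (?\<rho> * r)) \<le> enn2real (nu r)\<close> \<open>0 < V\<close> r by (intro mult_left_mono) auto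
    finally have "K * ?M r \<le> 2 * V * r ^ (d + 2) * enn2real (nu r)" .
    then show ?thesis
      using \<open>0 < V\<close> by (simp add: field_simps)
  qed
  then show ?thesis
    using cond_i_iff_second_moment[OF L] \<open>0 < V\<close> \<open>0 < K\<close> unfolding V_def d_def K_def by auto
qed

lemma cond_i_iff_cond_ii:
  assumes L: "levy_profile TYPE('a::euclidean_space) nu"
  shows "(\<exists>T1 c1. T1 > 0 \<and> c1 > 0 \<and> cond_i TYPE('a) nu T1 c1) \<longleftrightarrow>
    (\<exists>T2 c2 \<beta>2. T2 > 0 \<and> 0 < c2 \<and> c2 \<le> 1 \<and> 0 < \<beta>2 \<and> \<beta>2 < 2 \<and> cond_ii TYPE('a) nu T2 c2 \<beta>2)"
proof
  assume "\<exists>T1 c1. T1 > 0 \<and> c1 > 0 \<and> cond_i TYPE('a) nu T1 c1"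
  then obtain T c where "T > 0" "c > 0" "cond_i TYPE('a) nu T c" by blast
  then show "\<exists>T2 c2 \<beta>2. T2 > 0 \<and> 0 < c2 \<and> c2 \<le> 1 \<and> 0 < \<beta>2 \<and> \<beta>2 < 2 \<and> cond_ii TYPE('a) nu T2 c2 \<beta>2"
    using cond_i_imp_cond_ii[OF L] decay_exponent_bounds[of c, where 'a='a]
    by (intro exI[of _ T] exI[of _ 1] exI[of _ "2 - decay_exponent TYPE('a) c"]) auto
next
  assume "\<exists>T2 c2 \<beta>2. T2 > 0 \<and> 0 < c2 \<and> c2 \<le> 1 \<and> 0 < \<beta>2 \<and> \<beta>2 < 2 \<and> cond_ii TYPE('a) nu T2 c2 \<beta>2"
  then obtain T c \<beta> where T: "T > 0" and c: "0 < c" "c \<le> 1" and \<beta>: "\<beta> < 2"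
    and C: "cond_ii TYPE('a) nu T c \<beta>" by blast
  have "0 < doubling_ratio c \<beta>" using doubling_ratio_bounds c \<beta> by simp
  then have "0 < ereal (doubling_ratio c \<beta>) * T" using T by (cases T) auto
  then show "\<exists>T1 c1. T1 > 0 \<and> c1 > 0 \<and> cond_i TYPE('a) nu T1 c1"
    using cond_ii_imp_cond_i[OF L C] \<open>0 < doubling_ratio c \<beta>\<close> c \<beta> by (intro exI conjI) auto
qed

lemma cond_i_iff_cond_iii:
  assumes L: "levy_profile TYPE('a::euclidean_space) nu"
  shows "(\<exists>T1 c1. T1 > 0 \<and> c1 > 0 \<and> cond_i TYPE('a) nu T1 c1) \<longleftrightarrow>
    (\<exists>T3 c3 \<beta>3. T3 > 0 \<and> 0 < c3 \<and> c3 \<le> 1 \<and> 0 \<le> \<beta>3 \<and> \<beta>3 < 2 \<and> cond_iii TYPE('a) nu T3 c3 \<beta>3)"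
proof
  assume "\<exists>T1 c1. T1 > 0 \<and> c1 > 0 \<and> cond_i TYPE('a) nu T1 c1"
  then obtain T c where "T > 0" "c > 0" "cond_i TYPE('a) nu T c" by blast
  then show "\<exists>T3 c3 \<beta>3. T3 > 0 \<and> 0 < c3 \<and> c3 \<le> 1 \<and> 0 \<le> \<beta>3 \<and> \<beta>3 < 2 \<and> cond_iii TYPE('a) nu T3 c3 \<beta>3"
    using cond_i_imp_cond_iii[OF L] decay_exponent_bounds[of c, where 'a='a]
    by (intro exI[of _ T] exI[of _ "decay_exponent TYPE('a) c"] exI[of _ "2 - decay_exponent TYPE('a) c"]) auto
next
  assume "\<exists>T3 c3 \<beta>3. T3 > 0 \<and> 0 < c3 \<and> c3 \<le> 1 \<and> 0 \<le> \<beta>3 \<and> \<beta>3 < 2 \<and> cond_iii TYPE('a) nu T3 c3 \<beta>3"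
  then obtain T c \<beta> where T: "T > 0" and c: "0 < c" "c \<le> 1" and \<beta>: "\<beta> < 2"
    and C: "cond_iii TYPE('a) nu T c \<beta>" by blast
  then show "\<exists>T1 c1. T1 > 0 \<and> c1 > 0 \<and> cond_i TYPE('a) nu T1 c1"
    using cond_iii_imp_cond_i[OF L C] doubling_ratio_bounds[of c \<beta>] by (intro exI conjI) auto
qed

theorem lemma6p3:
  shows
  "(\<forall>nu. levy_profile TYPE('a::euclidean_space) nu \<longrightarrow>
      ((\<exists>T1 c1. T1 > 0 \<and> c1 > 0 \<and> cond_i TYPE('a) nu T1 c1) \<longleftrightarrow>
       (\<exists>T2 c2 \<beta>2. T2 > 0 \<and> 0 < c2 \<and> c2 \<le> 1 \<and> 0 < \<beta>2 \<and> \<beta>2 < 2 \<and> cond_ii TYPE('a) nu T2 c2 \<beta>2)) \<and>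
      ((\<exists>T1 c1. T1 > 0 \<and> c1 > 0 \<and> cond_i TYPE('a) nu T1 c1) \<longleftrightarrow>
       (\<exists>T3 c3 \<beta>3. T3 > 0 \<and> 0 < c3 \<and> c3 \<le> 1 \<and> 0 \<le> \<beta>3 \<and> \<beta>3 < 2 \<and> cond_iii TYPE('a) nu T3 c3 \<beta>3)))
   \<and>
   (\<forall>c1 > 0. \<exists>\<beta>2. 0 < \<beta>2 \<and> \<beta>2 < 2 \<and>
      (\<forall>nu T1. levy_profile TYPE('a) nu \<longrightarrow> T1 > 0 \<longrightarrow> cond_i TYPE('a) nu T1 c1 \<longrightarrow>
         cond_ii TYPE('a) nu T1 1 \<beta>2))
   \<and>
   (\<forall>c1 > 0. \<exists>c3 \<beta>3. 0 < c3 \<and> c3 \<le> 1 \<and> 0 \<le> \<beta>3 \<and> \<beta>3 < 2 \<and>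
      (\<forall>nu T1. levy_profile TYPE('a) nu \<longrightarrow> T1 > 0 \<longrightarrow> cond_i TYPE('a) nu T1 c1 \<longrightarrow>
         cond_iii TYPE('a) nu T1 c3 \<beta>3))
   \<and>
   (\<forall>c2 \<beta>2. 0 < c2 \<and> c2 \<le> 1 \<and> 0 < \<beta>2 \<and> \<beta>2 < 2 \<longrightarrow> (\<exists>c1 > 0.
      (\<forall>nu T2. levy_profile TYPE('a) nu \<longrightarrow> T2 > 0 \<longrightarrow> cond_ii TYPE('a) nu T2 c2 \<beta>2 \<longrightarrow>
         cond_i TYPE('a) nu (ereal ((c2 / 2) powr (1 / (2 - \<beta>2))) * T2) c1)))
   \<and>
   (\<forall>c3 \<beta>3. 0 < c3 \<and> c3 \<le> 1 \<and> 0 \<le> \<beta>3 \<and> \<beta>3 < 2 \<longrightarrow> (\<exists>c1 > 0.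
      (\<forall>nu T3. levy_profile TYPE('a) nu \<longrightarrow> T3 > 0 \<longrightarrow> cond_iii TYPE('a) nu T3 c3 \<beta>3 \<longrightarrow>
         cond_i TYPE('a) nu T3 c1)))"
  apply (intro conjI allI impI)
  subgoal by (rule cond_i_iff_cond_ii)
  subgoal by (rule cond_i_iff_cond_iii)
  subgoal for c1
    using cond_i_imp_cond_ii decay_exponent_bounds[of c1, where 'a='a]
    by (intro exI[of _ "2 - decay_exponent TYPE('a) c1"]) auto
  subgoal for c1
    using cond_i_imp_cond_iii decay_exponent_bounds[of c1, where 'a='a]
    by (intro exI[of _ "decay_exponent TYPE('a) c1"] exI[of _ "2 - decay_exponent TYPE('a) c1"]) auto
  subgoal for c2 \<beta>2
    using cond_ii_imp_cond_i[where 'a='a and c=c2 and \<beta>=\<beta>2] doubling_ratio_bounds[of c2 \<beta>2]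
    by (intro exI[of _ "doubling_ratio c2 \<beta>2 ^ (DIM('a) + 2) / unit_ball_vol (real DIM('a))"])
      (auto simp: doubling_ratio_def[symmetric])
  subgoal for c3 \<beta>3
    using cond_iii_imp_cond_i[where 'a='a and c=c3 and \<beta>=\<beta>3] doubling_ratio_bounds[of c3 \<beta>3]
    by (intro exI[of _ "c3 * doubling_ratio c3 \<beta>3 powr (real DIM('a) + \<beta>3)
      / (2 * unit_ball_vol (real DIM('a)))"]) auto
  done

end
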